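(* Let $n\ge3$. If $W\in G^{\mathbb{R}}(2,\mathbb{C}^n)$ is not a complex line, then the orbit $\mathrm{U}(n)\cdot W$ has the transitivity property.
   Context: $G^{\mathbb{R}}(2,\mathbb{C}^n)$ is the Grassmannian of real $2$-planes in $\mathbb{C}^n=\mathbb{R}^{2n}$. A set $\mathbb{G}$ of real planes has the transitivity property if for any two vectors $x,y\in\mathbb{C}^n$ there exist $W_1,\dots,W_k\in\mathbb{G}$ with $x\in W_1$, $y\in W_k$ and $\dim_{\mathbb{R}}(W_i\cap W_{i+1})>0$ for $i=1,\dots,k-1$. *)

theory Defs
  imports "HOL-Analysis.Analysis"
begin

text \<open>C^n is modelled as complex ^ 'n with CARD('n) = n. Real subspaces and real
dimension are HOL-Analysis' subspace/dim (scalars = real).\<close>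

definition real_grassmannian2 :: "(complex ^ 'n) set set" where
  "real_grassmannian2 = {W. subspace W \<and> dim W = 2}"

definition complex_line :: "(complex ^ 'n) set \<Rightarrow> bool" where
  "complex_line W \<longleftrightarrow> (\<exists>v. v \<noteq> 0 \<and> W = {c *s v | c. True})"

definition cmat_adjoint :: "complex ^ 'n ^ 'n \<Rightarrow> complex ^ 'n ^ 'n" where
  "cmat_adjoint U = (\<chi> i j. cnj (U $ j $ i))"

definition unitary_mat :: "complex ^ 'n ^ 'n \<Rightarrow> bool" where
  "unitary_mat U \<longleftrightarrow> cmat_adjoint U ** U = mat 1"

definition unitary_orbit :: "(complex ^ 'n) set \<Rightarrow> (complex ^ 'n) set set" where
  "unitary_orbit W = {(\<lambda>x. U *v x) ` W | U. unitary_mat U}"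

definition transitivity_property :: "(complex ^ 'n) set set \<Rightarrow> bool" where
  "transitivity_property G \<longleftrightarrow>
     (\<forall>x y. \<exists>Ws. Ws \<noteq> [] \<and> set Ws \<subseteq> G \<and> x \<in> hd Ws \<and> y \<in> last Ws \<and>
        (\<forall>i. Suc i < length Ws \<longrightarrow> dim (Ws ! i \<inter> Ws ! Suc i) > 0))"

end

theory Submission
  imports Defs
begin

text \<open>Write \<open>W = span\<^sub>\<real> {a, \<lambda>a + e}\<close> with \<open>e \<bottom> a\<close>, \<open>e \<noteq> 0\<close>; this is possible because \<open>W\<close> is
not a complex line. A unitary map sends the orthogonal pair \<open>(a, e)\<close> to any orthogonal pair of
the same lengths, so for \<open>z \<noteq> 0\<close> and \<open>v \<bottom> z\<close> the vectors \<open>z\<close> and \<open>cz + v\<close> lie in one plane of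
the orbit as soon as \<open>|Im c| |z| = |\<kappa>| |v|\<close>, where \<open>\<kappa> = Im \<lambda> |a| / |e|\<close>. Two such steps
join \<open>z\<close> to \<open>\<omega>z\<close> for every \<open>\<omega> \<noteq> 0\<close>; combining these rotations with one more step joins \<open>z\<close>
to \<open>cz + v\<close> whenever \<open>|\<kappa>| |v| \<le> |c| |z|\<close>, i.e. whenever the two vectors make a small
Hermitian angle. Walking from \<open>x\<close> to an orthogonal \<open>g\<close> along \<open>x + tg\<close> in steps of length
about \<open>|x| / |\<kappa>|\<close> therefore joins any two orthogonal vectors, and for \<open>n \<ge> 3\<close> any two vectors
have a common nonzero orthogonal vector.\<close>

section \<open>A Hermitian inner product on \<open>\<complex>\<^sup>n\<close>\<close>

definition cinner :: "complex ^ 'n \<Rightarrow> complex ^ 'n \<Rightarrow> complex" where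
  "cinner x y = (\<Sum>i\<in>UNIV. x $ i * cnj (y $ i))"

lemma cinner_add_left: "cinner (x + y) z = cinner x z + cinner y z"
  by (simp add: cinner_def algebra_simps sum.distrib)

lemma cinner_add_right: "cinner z (x + y) = cinner z x + cinner z y"
  by (simp add: cinner_def algebra_simps sum.distrib)

lemma cinner_diff_left: "cinner (x - y) z = cinner x z - cinner y z"
  by (simp add: cinner_def algebra_simps sum_subtractf)

lemma cinner_diff_right: "cinner z (x - y) = cinner z x - cinner z y"
  by (simp add: cinner_def algebra_simps sum_subtractf)

lemma cinner_smult_left: "cinner (c *s x) z = c * cinner x z"
  by (simp add: cinner_def sum_distrib_left mult.assoc)

lemma cinner_smult_right: "cinner z (c *s x) = cnj c * cinner z x"
  by (simp add: cinner_def sum_distrib_left algebra_simps)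

lemma scaleR_eq_of_real_smult: "r *\<^sub>R (x :: complex ^ 'n) = of_real r *s x"
  unfolding vec_eq_iff by (simp add: scaleR_conv_of_real[where 'a=complex])

lemma cinner_scaleR_left: "cinner (r *\<^sub>R x) z = of_real r * cinner x z"
  by (simp add: scaleR_eq_of_real_smult cinner_smult_left)

lemma cinner_scaleR_right: "cinner z (r *\<^sub>R x) = of_real r * cinner z x"
  by (simp add: scaleR_eq_of_real_smult cinner_smult_right)

lemma cnj_cinner: "cnj (cinner x y) = cinner y x"
  by (simp add: cinner_def mult.commute)

lemma cinner_zero_left [simp]: "cinner 0 x = 0"
  and cinner_zero_right [simp]: "cinner x 0 = 0"
  by (simp_all add: cinner_def)

lemma cinner_eq_0_commute: "cinner x y = 0 \<longleftrightarrow> cinner y x = 0"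
  by (metis cnj_cinner complex_cnj_zero_iff)

lemma Re_cinner: "Re (cinner x y) = x \<bullet> y"
  by (simp add: cinner_def inner_vec_def inner_complex_def)

lemma cinner_self: "cinner x x = of_real ((norm x)\<^sup>2)"
proof -
  have "Im (cinner x x) = 0"
    by (simp add: cinner_def Im_sum)
  then show ?thesis
    by (simp add: complex_eq_iff Re_cinner power2_norm_eq_inner)
qed

lemma norm_add_cinner_orthogonal:
  "cinner x y = 0 \<Longrightarrow> (norm (x + y))\<^sup>2 = (norm x)\<^sup>2 + (norm y)\<^sup>2"
  by (metis Re_cinner norm_add_Pythagorean orthogonal_def zero_complex.sel(1))

lemma norm_smult: "norm (c *s (x :: complex ^ 'n)) = cmod c * norm x"
proof -
  have "of_real ((norm (c *s x))\<^sup>2) = (of_real ((cmod c * norm x)\<^sup>2) :: complex)"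
    by (simp add: cinner_self[symmetric] cinner_smult_left cinner_smult_right
        complex_norm_square power_mult_distrib del: of_real_power)
  then show ?thesis
    by (simp add: power2_eq_iff_nonneg del: of_real_power)
qed

section \<open>Unitary matrices\<close>

lemma cinner_matrix_left: "cinner (A *v x) y = cinner x (cmat_adjoint A *v y)"
proof -
  have "cinner (A *v x) y = (\<Sum>i\<in>UNIV. \<Sum>j\<in>UNIV. x $ j * (A $ i $ j * cnj (y $ i)))"
    by (simp add: cinner_def matrix_vector_mult_def sum_distrib_right mult.assoc mult.left_commute)
  also have "\<dots> = (\<Sum>j\<in>UNIV. \<Sum>i\<in>UNIV. x $ j * (A $ i $ j * cnj (y $ i)))"
    by (rule sum.swap)
  also have "\<dots> = cinner x (cmat_adjoint A *v y)"
    by (simp add: cinner_def matrix_vector_mult_def cmat_adjoint_def sum_distrib_left)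
  finally show ?thesis .
qed

lemma cinner_unitary:
  "unitary_mat U \<Longrightarrow> cinner (U *v x) (U *v y) = cinner x y"
  by (simp add: cinner_matrix_left matrix_vector_mul_assoc unitary_mat_def)

lemma norm_unitary: "unitary_mat U \<Longrightarrow> norm (U *v x) = norm x"
  using cinner_unitary[of U x x] by (simp add: cinner_self del: of_real_power)

lemma cmat_adjoint_mult: "cmat_adjoint (A ** B) = cmat_adjoint B ** cmat_adjoint A"
  by (simp add: cmat_adjoint_def matrix_matrix_mult_def vec_eq_iff mult.commute)

lemma unitary_mult: "unitary_mat U \<Longrightarrow> unitary_mat V \<Longrightarrow> unitary_mat (U ** V)"
  unfolding unitary_mat_def cmat_adjoint_mult by (metis matrix_mul_assoc matrix_mul_lid)

lemma unitary_one: "unitary_mat (mat 1)"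
proof -
  have "cmat_adjoint (mat 1) = mat 1"
    by (simp add: cmat_adjoint_def mat_def vec_eq_iff)
  then show ?thesis
    by (simp add: unitary_mat_def)
qed

definition rank_one_update :: "complex ^ 'n \<Rightarrow> complex \<Rightarrow> complex ^ 'n ^ 'n" where
  "rank_one_update u c = mat 1 + (\<chi> i j. c * u $ i * cnj (u $ j))"

lemma rank_one_update_apply: "rank_one_update u c *v z = z + (c * cinner z u) *s u"
proof -
  have "(\<chi> i j. c * u $ i * cnj (u $ j)) *v z = (c * cinner z u) *s u"
    by (simp add: vec_eq_iff matrix_vector_mult_def cinner_def sum_distrib_left mult_ac)
  then show ?thesis
    by (simp add: rank_one_update_def matrix_vector_mult_add_rdistrib)
qed

lemma cmat_adjoint_rank_one_update:
  "cmat_adjoint (rank_one_update u c) = rank_one_update u (cnj c)"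
  by (simp add: rank_one_update_def cmat_adjoint_def mat_def vec_eq_iff mult_ac)

lemma unitary_rank_one_update:
  assumes "2 * Re c + (cmod c)\<^sup>2 * (norm u)\<^sup>2 = 0"
  shows "unitary_mat (rank_one_update u c)"
proof -
  have "c + cnj c + cnj c * c * cinner u u = of_real (2 * Re c + (cmod c)\<^sup>2 * (norm u)\<^sup>2)"
    by (simp add: complex_add_cnj cinner_self complex_norm_square mult.commute del: of_real_power)
  then have scalar: "c + cnj c + cnj c * c * cinner u u = 0"
    using assms by simp
  have "rank_one_update u (cnj c) *v (rank_one_update u c *v z)
      = z + ((c + cnj c + cnj c * c * cinner u u) * cinner z u) *s u" for z
    by (simp add: rank_one_update_apply cinner_add_left cinner_smult_left vec_eq_iff algebra_simps)
  then show ?thesis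
    by (simp add: unitary_mat_def matrix_eq cmat_adjoint_rank_one_update
        matrix_vector_mul_assoc[symmetric] scalar)
qed

lemma unitary_phase:
  assumes "cmod \<phi> = 1"
  shows "\<exists>U. unitary_mat U \<and> U *v u = \<phi> *s u \<and> (\<forall>z. cinner z u = 0 \<longrightarrow> U *v z = z)"
proof (cases "u = 0")
  case True
  then show ?thesis
    using unitary_one by (intro exI[of _ "mat 1"]) auto
next
  case False
  define L where "L = (norm u)\<^sup>2"
  have L: "L > 0"
    using False by (simp add: L_def)
  define c where "c = (\<phi> - 1) / of_real L"
  have "(Re \<phi>)\<^sup>2 + (Im \<phi>)\<^sup>2 = 1"
    using assms cmod_power2[of \<phi>] by simp
  then have "(cmod (\<phi> - 1))\<^sup>2 = 2 - 2 * Re \<phi>"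
    unfolding cmod_power2 by (simp add: power2_eq_square algebra_simps)
  have c_parts: "Re c = Re (\<phi> - 1) / L" "cmod c = cmod (\<phi> - 1) / L"
    using L by (simp_all add: c_def norm_divide)
  have "L * (2 * Re c + (cmod c)\<^sup>2 * L) = 2 * Re (\<phi> - 1) + (cmod (\<phi> - 1))\<^sup>2"
    using L unfolding c_parts by (simp add: power2_eq_square field_simps)
  also have "\<dots> = 0"
    using \<open>(cmod (\<phi> - 1))\<^sup>2 = 2 - 2 * Re \<phi>\<close> by simp
  finally have "L * (2 * Re c + (cmod c)\<^sup>2 * L) = 0" .
  then have "unitary_mat (rank_one_update u c)"
    using L by (intro unitary_rank_one_update) (simp add: L_def)
  moreover have "rank_one_update u c *v u = \<phi> *s u"
    using L by (simp add: rank_one_update_apply cinner_self c_def L_def vec_eq_iff field_simps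
        del: of_real_power)
  ultimately show ?thesis
    by (intro exI[of _ "rank_one_update u c"]) (simp add: rank_one_update_apply)
qed

lemma unitary_swap:
  assumes "norm u = norm w" and "cinner u w = cinner w u"
  shows "\<exists>U. unitary_mat U \<and> U *v u = w \<and>
    (\<forall>z. cinner z u = 0 \<and> cinner z w = 0 \<longrightarrow> U *v z = z)"
proof (cases "u = w")
  case True
  then show ?thesis
    using unitary_one by (intro exI[of _ "mat 1"]) auto
next
  case False
  define d where "d = u - w"
  define L where "L = (norm d)\<^sup>2"
  have L: "L > 0"
    using False by (simp add: L_def d_def)
  define c :: complex where "c = - 2 / of_real L"
  have "Re c = - 2 / L" "cmod c = 2 / L"
    using L by (simp_all add: c_def norm_divide)
  then have "2 * Re c + (cmod c)\<^sup>2 * L = 0"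
    using L by (simp add: power2_eq_square)
  then have "unitary_mat (rank_one_update d c)"
    by (intro unitary_rank_one_update) (simp add: L_def)
  moreover have "rank_one_update d c *v u = w"
  proof -
    have "cinner u u = cinner w w"
      using assms(1) by (simp add: cinner_self)
    have "of_real L = cinner d d"
      by (simp add: L_def cinner_self)
    also have "\<dots> = 2 * cinner u d"
      using assms(2) \<open>cinner u u = cinner w w\<close>
      by (simp add: d_def cinner_diff_left cinner_diff_right)
    finally have "of_real L = 2 * cinner u d" .
    then have "c * cinner u d = - 1"
      using L by (auto simp: c_def field_simps)
    then show ?thesis
      by (simp add: rank_one_update_apply d_def)
  qed
  moreover have "rank_one_update d c *v z = z" if "cinner z u = 0" "cinner z w = 0" for z
    using that by (simp add: rank_one_update_apply d_def cinner_diff_right)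
  ultimately show ?thesis
    by blast
qed

lemma unitary_transport:
  assumes "norm u = norm w"
  shows "\<exists>U. unitary_mat U \<and> U *v u = w \<and>
    (\<forall>z. cinner z u = 0 \<and> cinner z w = 0 \<longrightarrow> U *v z = z)"
proof -
  define \<phi> where "\<phi> = cis (- Arg (cinner u w))"
  have "\<phi> * rcis (cmod (cinner u w)) (Arg (cinner u w)) = of_real (cmod (cinner u w))"
    by (simp add: \<phi>_def rcis_def cis_mult)
  then have real: "cinner (\<phi> *s u) w = of_real (cmod (cinner u w))"
    by (simp add: rcis_cmod_Arg cinner_smult_left)
  obtain U1 where U1: "unitary_mat U1" "U1 *v u = \<phi> *s u"
    and fix1: "\<And>z. cinner z u = 0 \<Longrightarrow> U1 *v z = z"
    using unitary_phase[of \<phi> u] by (auto simp: \<phi>_def)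
  have "cinner (\<phi> *s u) w = cinner w (\<phi> *s u)"
    by (metis real cnj_cinner complex_cnj_complex_of_real)
  then obtain U2 where U2: "unitary_mat U2" "U2 *v (\<phi> *s u) = w"
    and fix2: "\<And>z. cinner z (\<phi> *s u) = 0 \<Longrightarrow> cinner z w = 0 \<Longrightarrow> U2 *v z = z"
    using unitary_swap[of "\<phi> *s u" w] assms by (auto simp: norm_smult \<phi>_def)
  have "unitary_mat (U2 ** U1)" "(U2 ** U1) *v u = w"
    using U1 U2 by (simp_all add: unitary_mult matrix_vector_mul_assoc[symmetric])
  moreover have "(U2 ** U1) *v z = z" if "cinner z u = 0" "cinner z w = 0" for z
    using that fix1 fix2 by (simp add: matrix_vector_mul_assoc[symmetric] cinner_smult_right)
  ultimately show ?thesis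
    by blast
qed

lemma unitary_transport_pair:
  assumes "norm x = norm a" "norm f = norm e" "cinner e a = 0" "cinner f x = 0"
  shows "\<exists>U. unitary_mat U \<and> U *v a = x \<and> U *v e = f"
proof -
  obtain U1 where U1: "unitary_mat U1" "U1 *v a = x"
    using unitary_transport[of a x] assms(1) by auto
  have "norm (U1 *v e) = norm f" "cinner (U1 *v e) x = 0"
    using assms U1 by (metis norm_unitary, metis cinner_unitary)
  then obtain U2 where U2: "unitary_mat U2" "U2 *v (U1 *v e) = f"
    and fix2: "\<And>z. cinner z (U1 *v e) = 0 \<Longrightarrow> cinner z f = 0 \<Longrightarrow> U2 *v z = z"
    using unitary_transport[of "U1 *v e" f] by auto
  have "U2 *v x = x"
    using fix2 assms(4) \<open>cinner (U1 *v e) x = 0\<close> cinner_eq_0_commute by blast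
  then show ?thesis
    using U1 U2 by (intro exI[of _ "U2 ** U1"]) (simp add: unitary_mult matrix_vector_mul_assoc[symmetric])
qed

section \<open>Orthogonal decompositions\<close>

lemma cinner_orthogonal_exists:
  fixes x y :: "complex ^ 'n"
  assumes "CARD('n) \<ge> 3"
  shows "\<exists>f. f \<noteq> 0 \<and> cinner f x = 0 \<and> cinner f y = 0"
proof -
  define F :: "complex ^ 'n \<Rightarrow> complex ^ 2" where
    "F = (\<lambda>f. \<chi> i. if i = 1 then cinner f x else cinner f y)"
  have lin: "linear F"
    by (rule linearI) (simp_all add: F_def vec_eq_iff cinner_add_left cinner_scaleR_left
        scaleR_conv_of_real[where 'a=complex])
  have "\<not> inj F"
  proof
    assume "inj F"
    then have "dim (range F) = dim (UNIV :: (complex ^ 'n) set)"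
      using lin by (intro dim_image_eq) (auto intro: inj_on_subset)
    moreover have "dim (range F) \<le> dim (UNIV :: (complex ^ 2) set)"
      by (rule dim_subset) simp
    ultimately show False
      using assms by (simp add: dim_UNIV)
  qed
  then obtain f1 f2 where "f1 \<noteq> f2" "F f1 = F f2"
    unfolding inj_def by blast
  then have "f1 - f2 \<noteq> 0" "F (f1 - f2) = 0"
    using linear_diff[OF lin] by auto
  moreover have "F (f1 - f2) $ 1 = cinner (f1 - f2) x" "F (f1 - f2) $ 2 = cinner (f1 - f2) y"
    by (simp_all add: F_def)
  ultimately show ?thesis
    by (intro exI[of _ "f1 - f2"]) auto
qed

lemma cinner_orthogonal_decomposition:
  fixes y z :: "complex ^ 'n"
  assumes "z \<noteq> 0"
  obtains c v where "y = c *s z + v" "cinner v z = 0"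
proof
  define c where "c = cinner y z / of_real ((norm z)\<^sup>2)"
  show "y = c *s z + (y - c *s z)"
    by simp
  show "cinner (y - c *s z) z = 0"
    using assms by (simp add: c_def cinner_diff_left cinner_smult_left cinner_self del: of_real_power)
qed

lemma cinner_smult_add_left:
  "cinner v z = 0 \<Longrightarrow> cinner (c *s z + v) z = c * of_real ((norm z)\<^sup>2)"
  by (simp add: cinner_add_left cinner_smult_left cinner_self)

lemma norm_smult_add:
  assumes "cinner v z = 0"
  shows "(norm (c *s z + v))\<^sup>2 = (cmod c)\<^sup>2 * (norm z)\<^sup>2 + (norm v)\<^sup>2"
proof -
  have "cinner (c *s z) v = 0"
    using assms by (simp add: cinner_smult_left cinner_eq_0_commute)
  then show ?thesis
    by (simp add: norm_add_cinner_orthogonal norm_smult power_mult_distrib)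
qed

lemma gram_smult_add:
  assumes "cinner v z = 0"
  shows "(norm (c *s z + v))\<^sup>2 * (norm z)\<^sup>2 - (cmod (cinner (c *s z + v) z))\<^sup>2
    = (norm v)\<^sup>2 * (norm z)\<^sup>2"
  using assms unfolding norm_smult_add[OF assms] cinner_smult_add_left[OF assms]
  by (simp add: norm_mult norm_power power_mult_distrib algebra_simps)

lemma norm_add_scaleR_orthogonal:
  "cinner g x = 0 \<Longrightarrow> (norm (x + t *\<^sub>R g))\<^sup>2 = (norm x)\<^sup>2 + t\<^sup>2 * (norm g)\<^sup>2"
  by (simp add: norm_add_cinner_orthogonal cinner_scaleR_right cinner_eq_0_commute power_mult_distrib)

lemma add_scaleR_orthogonal_neq_0:
  assumes "cinner g x = 0" "x \<noteq> 0"
  shows "x + t *\<^sub>R g \<noteq> 0"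
proof -
  have "(norm x)\<^sup>2 \<le> (norm (x + t *\<^sub>R g))\<^sup>2"
    using norm_add_scaleR_orthogonal[OF assms(1)] by simp
  then show ?thesis
    using assms(2) by auto
qed

lemma cinner_add_scaleR_orthogonal:
  assumes "cinner g x = 0"
  shows "cinner (x + t *\<^sub>R g) (x + s *\<^sub>R g) = of_real ((norm x)\<^sup>2 + t * s * (norm g)\<^sup>2)"
  using assms cinner_eq_0_commute[of g x]
  by (simp add: cinner_add_left cinner_add_right cinner_scaleR_left cinner_scaleR_right cinner_self)

section \<open>Chains of planes\<close>

lemma unitary_orbitI: "unitary_mat U \<Longrightarrow> (\<lambda>x. U *v x) ` W \<in> unitary_orbit W"
  by (auto simp: unitary_orbit_def)

lemma zero_mem_unitary_orbit: "subspace W \<Longrightarrow> P \<in> unitary_orbit W \<Longrightarrow> 0 \<in> P"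
  by (auto simp: unitary_orbit_def subspace_0 image_iff intro!: bexI[of _ 0])

text \<open>Consecutive planes of a chain have to share a nonzero vector, so only nonzero vectors
  are related.\<close>

definition coplanar :: "(complex ^ 'n) set set \<Rightarrow> complex ^ 'n \<Rightarrow> complex ^ 'n \<Rightarrow> bool" where
  "coplanar G x y \<longleftrightarrow> x \<noteq> 0 \<and> y \<noteq> 0 \<and> (\<exists>P\<in>G. x \<in> P \<and> y \<in> P)"

abbreviation linked :: "(complex ^ 'n) set set \<Rightarrow> complex ^ 'n \<Rightarrow> complex ^ 'n \<Rightarrow> bool" where
  "linked G \<equiv> (coplanar G)\<^sup>+\<^sup>+"

lemma linked_sym: "linked G x y \<Longrightarrow> linked G y x"
proof -
  have "(coplanar G)\<inverse>\<inverse> = coplanar G"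
    by (auto simp: coplanar_def fun_eq_iff)
  then show "linked G x y \<Longrightarrow> linked G y x"
    by (metis conversep_iff tranclp_converse)
qed

lemma chain_if_linked:
  assumes "linked G x y"
  shows "\<exists>Ws. Ws \<noteq> [] \<and> set Ws \<subseteq> G \<and> x \<in> hd Ws \<and> y \<in> last Ws \<and>
    (\<forall>i. Suc i < length Ws \<longrightarrow> dim (Ws ! i \<inter> Ws ! Suc i) > 0)"
  using assms
proof (induction rule: tranclp_induct)
  case (base y)
  then obtain P where "P \<in> G" "x \<in> P" "y \<in> P"
    by (auto simp: coplanar_def)
  then show ?case
    by (intro exI[of _ "[P]"]) auto
next
  case (step y z)
  obtain Ws where Ws: "Ws \<noteq> []" "set Ws \<subseteq> G" "x \<in> hd Ws" "y \<in> last Ws"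
    and chain: "\<forall>i. Suc i < length Ws \<longrightarrow> dim (Ws ! i \<inter> Ws ! Suc i) > 0"
    using step.IH by blast
  obtain P where P: "P \<in> G" "y \<in> P" "z \<in> P" and "y \<noteq> 0"
    using step.hyps(2) by (auto simp: coplanar_def)
  have "\<not> last Ws \<inter> P \<subseteq> {0}"
    using Ws(4) P(2) \<open>y \<noteq> 0\<close> by blast
  then have junction: "dim (last Ws \<inter> P) > 0"
    by (metis dim_eq_0 gr0I)
  have "dim ((Ws @ [P]) ! i \<inter> (Ws @ [P]) ! Suc i) > 0" if "Suc i < length (Ws @ [P])" for i
  proof (cases "Suc i < length Ws")
    case True
    then show ?thesis
      using chain by (simp add: nth_append)
  next
    case False
    then have "i = length Ws - 1"
      using that by simp
    then have "(Ws @ [P]) ! i = last Ws" "(Ws @ [P]) ! Suc i = P"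
      using Ws(1) by (simp_all add: nth_append last_conv_nth)
    then show ?thesis
      using junction by simp
  qed
  then show ?case
    using Ws P by (intro exI[of _ "Ws @ [P]"]) auto
qed

lemma transitivity_property_if_linked:
  fixes G :: "(complex ^ 'n) set set"
  assumes "\<And>P. P \<in> G \<Longrightarrow> 0 \<in> P" and "\<And>x y. x \<noteq> 0 \<Longrightarrow> y \<noteq> 0 \<Longrightarrow> linked G x y"
  shows "transitivity_property G"
  unfolding transitivity_property_def
proof (intro allI)
  fix x y :: "complex ^ 'n"
  define nonzero :: "complex ^ 'n \<Rightarrow> complex ^ 'n" where
    "nonzero v = (if v = 0 then axis undefined 1 else v)" for v
  have "nonzero v \<noteq> 0" for v
    by (simp add: nonzero_def axis_eq_0_iff)
  then obtain Ws where Ws: "Ws \<noteq> []" "set Ws \<subseteq> G" "nonzero x \<in> hd Ws" "nonzero y \<in> last Ws"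
    and chain: "\<forall>i. Suc i < length Ws \<longrightarrow> dim (Ws ! i \<inter> Ws ! Suc i) > 0"
    using chain_if_linked assms(2) by metis
  have "0 \<in> hd Ws" "0 \<in> last Ws"
    using Ws(1,2) assms(1) by (meson hd_in_set last_in_set subsetD)+
  then have "x \<in> hd Ws" "y \<in> last Ws"
    using Ws(3,4) by (auto simp: nonzero_def split: if_splits)
  then show "\<exists>Ws. Ws \<noteq> [] \<and> set Ws \<subseteq> G \<and> x \<in> hd Ws \<and> y \<in> last Ws \<and>
      (\<forall>i. Suc i < length Ws \<longrightarrow> dim (Ws ! i \<inter> Ws ! Suc i) > 0)"
    using Ws(1,2) chain by blast
qed

section \<open>The orbit of a plane that is not a complex line\<close>

locale noncomplex_plane =
  fixes W :: "(complex ^ 'n) set" and a e :: "complex ^ 'n" and lam :: complex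
  assumes card_ge_3: "CARD('n) \<ge> 3" and subspace_W: "subspace W"
    and a_mem: "a \<in> W" and lam_a_e_mem: "lam *s a + e \<in> W"
    and a_nonzero: "a \<noteq> 0" and e_nonzero: "e \<noteq> 0" and e_orthogonal_a: "cinner e a = 0"
begin

definition kappa :: real where
  "kappa = Im lam * norm a / norm e"

lemma orbit_plane:
  assumes "norm x = norm a" "norm f = norm e" "cinner f x = 0"
  obtains P where "P \<in> unitary_orbit W" "\<And>\<alpha> \<beta>. \<alpha> *\<^sub>R x + \<beta> *\<^sub>R (lam *s x + f) \<in> P"
proof -
  obtain U where U: "unitary_mat U" "U *v a = x" "U *v e = f"
    using unitary_transport_pair assms e_orthogonal_a by blast
  have "\<alpha> *\<^sub>R x + \<beta> *\<^sub>R (lam *s x + f) \<in> (\<lambda>v. U *v v) ` W" for \<alpha> \<beta>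
  proof -
    have "\<alpha> *\<^sub>R a + \<beta> *\<^sub>R (lam *s a + e) \<in> W"
      by (intro subspace_add subspace_scale subspace_W a_mem lam_a_e_mem)
    moreover have "U *v (\<alpha> *\<^sub>R a + \<beta> *\<^sub>R (lam *s a + e)) = \<alpha> *\<^sub>R x + \<beta> *\<^sub>R (lam *s x + f)"
      using U by (simp add: scaleR_eq_of_real_smult matrix_vector_right_distrib vector_scalar_commute)
    ultimately show ?thesis
      by (metis image_eqI)
  qed
  then show ?thesis
    using U(1) unitary_orbitI that by blast
qed

lemma linked_smult_add:
  assumes z: "z \<noteq> 0" and v: "cinner v z = 0" and y: "c *s z + v \<noteq> 0"
    and balanced: "\<bar>Im c\<bar> * norm z = \<bar>kappa\<bar> * norm v"
  shows "linked (unitary_orbit W) z (c *s z + v)"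
proof -
  have na: "norm a > 0" and ne: "norm e > 0" and nz: "norm z > 0"
    using a_nonzero e_nonzero z by simp_all
  obtain \<beta> where \<beta>: "\<bar>\<beta>\<bar> * norm e = norm v" "\<beta> * Im lam * norm a = Im c * norm z"
  proof (cases "Im lam = 0")
    case True
    then have "Im c = 0"
      using balanced nz by (simp add: kappa_def)
    then show ?thesis
      using True ne by (intro that[of "norm v / norm e"]) simp_all
  next
    case False
    have "\<bar>Im c * norm z / (Im lam * norm a)\<bar> * norm e = \<bar>kappa\<bar> * norm v * norm e / (\<bar>Im lam\<bar> * norm a)"
      using balanced by (simp add: abs_mult abs_divide)
    also have "\<dots> = norm v"
      using False na ne by (simp add: kappa_def abs_mult abs_divide)
    finally show ?thesis
      using False na by (intro that[of "Im c * norm z / (Im lam * norm a)"]) simp_all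
  qed
  obtain f where f: "\<beta> *\<^sub>R f = v" "norm f = norm e" "cinner f z = 0"
  proof (cases "\<beta> = 0")
    case True
    obtain f0 where "f0 \<noteq> 0" "cinner f0 z = 0"
      using cinner_orthogonal_exists[OF card_ge_3, of z z] by auto
    then show ?thesis
      using True \<beta>(1) ne
      by (intro that[of "(norm e / norm f0) *\<^sub>R f0"]) (simp_all add: cinner_scaleR_left)
  next
    case False
    then show ?thesis
      using \<beta>(1) v by (intro that[of "(1 / \<beta>) *\<^sub>R v"]) (auto simp: cinner_scaleR_left field_simps)
  qed
  define r where "r = norm a / norm z"
  have r: "r > 0"
    using na nz by (simp add: r_def)
  have "norm (r *\<^sub>R z) = norm a" "cinner f (r *\<^sub>R z) = 0"
    using r nz f(3) by (simp_all add: r_def cinner_scaleR_right)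
  then obtain P where P: "P \<in> unitary_orbit W"
    and span: "\<And>\<alpha> \<beta>. \<alpha> *\<^sub>R (r *\<^sub>R z) + \<beta> *\<^sub>R (lam *s (r *\<^sub>R z) + f) \<in> P"
    using orbit_plane f(2) by metis
  have "z \<in> P"
    using span[of "1 / r" 0] r by simp
  moreover have "c *s z + v \<in> P"
  proof -
    define \<alpha> where "\<alpha> = Re c / r - \<beta> * Re lam"
    have "\<beta> * Im lam * r = Im c"
      using \<beta>(2) nz by (simp add: r_def field_simps)
    then have "of_real (\<alpha> * r) + of_real (\<beta> * r) * lam = c"
      using r by (simp add: complex_eq_iff \<alpha>_def algebra_simps)
    moreover have "\<alpha> *\<^sub>R (r *\<^sub>R z) + \<beta> *\<^sub>R (lam *s (r *\<^sub>R z) + f)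
        = (of_real (\<alpha> * r) + of_real (\<beta> * r) * lam) *s z + \<beta> *\<^sub>R f"
      by (simp add: scaleR_eq_of_real_smult vec_eq_iff algebra_simps)
    ultimately have "\<alpha> *\<^sub>R (r *\<^sub>R z) + \<beta> *\<^sub>R (lam *s (r *\<^sub>R z) + f) = c *s z + v"
      using f(1) by simp
    then show ?thesis
      using span by metis
  qed
  ultimately show ?thesis
    using P z y by (intro tranclp.r_into_trancl) (auto simp: coplanar_def)
qed

lemma linked_smult:
  assumes z: "z \<noteq> 0" and \<omega>: "\<omega> \<noteq> 0"
  shows "linked (unitary_orbit W) z (\<omega> *s z)"
proof -
  obtain h where h: "h \<noteq> 0" "cinner h z = 0"
    using cinner_orthogonal_exists[OF card_ge_3, of z z] by auto
  have \<omega>z: "\<omega> *s z \<noteq> 0" "cinner h (\<omega> *s z) = 0"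
    using z \<omega> h(2) by (simp_all add: cinner_smult_right)
  consider "Im \<omega> = 0" | "kappa = 0" | "Im \<omega> \<noteq> 0" "kappa \<noteq> 0"
    by blast
  then show ?thesis
  proof cases
    case 1
    then show ?thesis
      using linked_smult_add[OF z, of 0 \<omega>] \<omega>z by simp
  next
    case 2
    have "linked (unitary_orbit W) z h"
      using linked_smult_add[OF z h(2), of 0] h 2 by simp
    moreover have "linked (unitary_orbit W) h (\<omega> *s z)"
      using linked_smult_add[OF h(1), of "\<omega> *s z" 0] \<omega>z 2 by (simp add: cinner_eq_0_commute)
    ultimately show ?thesis
      by (rule tranclp_trans)
  next
    case 3
    txt \<open>The intermediate vector \<open>(|\<omega>| + \<omega>) z + v\<close> is balanced relative to \<open>z\<close> and,
      because \<open>Im ((|\<omega>| + \<omega>) / \<omega>) |\<omega>| = - Im \<omega>\<close>, also relative to \<open>\<omega>z\<close>.\<close>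
    define c where "c = of_real (cmod \<omega>) + \<omega>"
    define v where "v = (\<bar>Im \<omega>\<bar> * norm z / (\<bar>kappa\<bar> * norm h)) *\<^sub>R h"
    have v: "cinner v z = 0" "\<bar>kappa\<bar> * norm v = \<bar>Im \<omega>\<bar> * norm z"
      using h 3 by (simp_all add: v_def cinner_scaleR_left)
    have "c \<noteq> 0"
      using 3 by (auto simp: c_def complex_eq_iff)
    then have "(norm (c *s z + v))\<^sup>2 > 0"
      unfolding norm_smult_add[OF v(1)] using z by (simp add: add_pos_nonneg)
    then have y: "c *s z + v \<noteq> 0"
      by auto
    have "linked (unitary_orbit W) z (c *s z + v)"
      using linked_smult_add[OF z v(1) y] v(2) by (simp add: c_def)
    moreover have "linked (unitary_orbit W) (\<omega> *s z) (c *s z + v)"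
    proof -
      have "(Re \<omega>)\<^sup>2 + (Im \<omega>)\<^sup>2 = (cmod \<omega>)\<^sup>2"
        by (simp add: cmod_power2)
      then have "Im (c / \<omega>) * cmod \<omega> = - Im \<omega>"
        using \<omega> by (simp add: c_def Im_divide power2_eq_square field_simps)
      then have "\<bar>Im (c / \<omega>)\<bar> * cmod \<omega> = \<bar>Im \<omega>\<bar>"
        by (metis abs_minus_cancel abs_mult abs_norm_cancel)
      then have balanced: "\<bar>Im (c / \<omega>)\<bar> * norm (\<omega> *s z) = \<bar>kappa\<bar> * norm v"
        by (simp add: v(2) norm_smult mult.assoc[symmetric])
      have "cinner v (\<omega> *s z) = 0"
        using v(1) by (simp add: cinner_smult_right)
      moreover have "(c / \<omega>) *s (\<omega> *s z) = c *s z"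
        using \<omega> by (simp add: vector_smult_assoc)
      ultimately show ?thesis
        using linked_smult_add[OF \<omega>z(1), of v "c / \<omega>"] balanced y by metis
    qed
    ultimately show ?thesis
      by (blast intro: tranclp_trans linked_sym)
  qed
qed

lemma linked_smult_add_le:
  assumes z: "z \<noteq> 0" and v: "cinner v z = 0" and y: "c *s z + v \<noteq> 0"
    and le: "kappa\<^sup>2 * (norm v)\<^sup>2 \<le> (cmod c)\<^sup>2 * (norm z)\<^sup>2"
  shows "linked (unitary_orbit W) z (c *s z + v)"
proof (cases "c = 0")
  case True
  then have "(kappa * norm v)\<^sup>2 \<le> 0"
    using le by (simp add: power_mult_distrib)
  then show ?thesis
    using linked_smult_add[OF z v y] True by (simp add: abs_mult[symmetric])
next
  case False
  have nz: "norm z > 0"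
    using z by simp
  define m where "m = \<bar>kappa\<bar> * norm v / norm z"
  have "m\<^sup>2 \<le> (cmod c)\<^sup>2"
    using le nz by (simp add: m_def power_divide power_mult_distrib pos_divide_le_eq)
  txt \<open>\<open>q\<close> has the modulus of \<open>c\<close> and the imaginary part demanded by \<open>linked_smult_add\<close>;
    the phase \<open>c / q\<close> is supplied by \<open>linked_smult\<close>.\<close>
  define q where "q = Complex (sqrt ((cmod c)\<^sup>2 - m\<^sup>2)) m"
  have "cmod q = cmod c"
    using \<open>m\<^sup>2 \<le> (cmod c)\<^sup>2\<close> by (simp add: q_def cmod_def)
  then have "q \<noteq> 0" "cmod (c / q) = 1"
    using False by (auto simp: norm_divide)
  then have "c / q \<noteq> 0" and \<omega>z: "(c / q) *s z \<noteq> 0" "norm ((c / q) *s z) = norm z"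
    using z by (auto simp: norm_smult)
  have "linked (unitary_orbit W) z ((c / q) *s z)"
    using linked_smult[OF z \<open>c / q \<noteq> 0\<close>] .
  moreover have "linked (unitary_orbit W) ((c / q) *s z) (q *s ((c / q) *s z) + v)"
  proof (rule linked_smult_add[OF \<omega>z(1)])
    show "cinner v ((c / q) *s z) = 0"
      using v by (simp add: cinner_smult_right)
    show "q *s ((c / q) *s z) + v \<noteq> 0"
      using y \<open>q \<noteq> 0\<close> by (simp add: vector_smult_assoc)
    show "\<bar>Im q\<bar> * norm ((c / q) *s z) = \<bar>kappa\<bar> * norm v"
      unfolding \<omega>z(2) using nz by (simp add: q_def m_def)
  qed
  ultimately show ?thesis
    using \<open>q \<noteq> 0\<close> by (simp add: vector_smult_assoc)
qed

lemma linked_if_gram_le: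
  assumes z: "z \<noteq> 0" and y: "y \<noteq> 0"
    and le: "kappa\<^sup>2 * ((norm y)\<^sup>2 * (norm z)\<^sup>2 - (cmod (cinner y z))\<^sup>2) \<le> (cmod (cinner y z))\<^sup>2"
  shows "linked (unitary_orbit W) z y"
proof -
  obtain c v where y_eq: "y = c *s z + v" and v: "cinner v z = 0"
    using cinner_orthogonal_decomposition[OF z] .
  have nz: "(norm z)\<^sup>2 > 0"
    using z by simp
  have "(kappa\<^sup>2 * (norm v)\<^sup>2) * (norm z)\<^sup>2 \<le> ((cmod c)\<^sup>2 * (norm z)\<^sup>2) * (norm z)\<^sup>2"
    using le unfolding y_eq gram_smult_add[OF v] unfolding cinner_smult_add_left[OF v]
    by (simp add: norm_mult norm_power power_mult_distrib mult.assoc)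
  then have "kappa\<^sup>2 * (norm v)\<^sup>2 \<le> (cmod c)\<^sup>2 * (norm z)\<^sup>2"
    using nz by (simp only: mult_le_cancel_right)
  then show ?thesis
    using linked_smult_add_le[OF z v] y unfolding y_eq by blast
qed

lemma linked_line_step:
  assumes x: "x \<noteq> 0" and g: "cinner g x = 0" and st: "0 \<le> s" "s \<le> t"
    and small: "\<bar>kappa\<bar> * (t - s) * norm g \<le> norm x"
  shows "linked (unitary_orbit W) (x + s *\<^sub>R g) (x + t *\<^sub>R g)"
proof (rule linked_if_gram_le)
  define X where "X = (norm x)\<^sup>2"
  define G where "G = (norm g)\<^sup>2"
  have X: "X > 0" and G: "G \<ge> 0"
    using x by (simp_all add: X_def G_def)
  show "x + s *\<^sub>R g \<noteq> 0" "x + t *\<^sub>R g \<noteq> 0"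
    using add_scaleR_orthogonal_neq_0[OF g x] by blast+
  have "t * s * G \<ge> 0"
    using st G by simp
  then have inner: "cmod (cinner (x + t *\<^sub>R g) (x + s *\<^sub>R g)) = X + t * s * G"
    unfolding cinner_add_scaleR_orthogonal[OF g] norm_of_real X_def[symmetric] G_def[symmetric]
    using X by simp
  have "kappa\<^sup>2 * ((norm (x + t *\<^sub>R g))\<^sup>2 * (norm (x + s *\<^sub>R g))\<^sup>2
      - (cmod (cinner (x + t *\<^sub>R g) (x + s *\<^sub>R g)))\<^sup>2) = X * (kappa\<^sup>2 * G * (t - s)\<^sup>2)"
    unfolding inner norm_add_scaleR_orthogonal[OF g] X_def[symmetric] G_def[symmetric]
    by (simp add: power2_eq_square algebra_simps)
  also have "\<dots> \<le> X * X"
  proof (rule mult_left_mono)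
    have "(\<bar>kappa\<bar> * (t - s) * norm g)\<^sup>2 \<le> (norm x)\<^sup>2"
      using small st by (intro power_mono) auto
    then show "kappa\<^sup>2 * G * (t - s)\<^sup>2 \<le> X"
      by (simp add: X_def G_def power_mult_distrib mult_ac)
  qed (use X in simp)
  also have "\<dots> \<le> (cmod (cinner (x + t *\<^sub>R g) (x + s *\<^sub>R g)))\<^sup>2"
    unfolding inner power2_eq_square using st X G by (intro mult_mono) auto
  finally show "kappa\<^sup>2 * ((norm (x + t *\<^sub>R g))\<^sup>2 * (norm (x + s *\<^sub>R g))\<^sup>2
      - (cmod (cinner (x + t *\<^sub>R g) (x + s *\<^sub>R g)))\<^sup>2)
      \<le> (cmod (cinner (x + t *\<^sub>R g) (x + s *\<^sub>R g)))\<^sup>2" .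
qed

lemma linked_line_end:
  assumes x: "x \<noteq> 0" and g0: "g \<noteq> 0" and g: "cinner g x = 0" and t: "0 \<le> t"
    and large: "\<bar>kappa\<bar> * norm x \<le> t * norm g"
  shows "linked (unitary_orbit W) (x + t *\<^sub>R g) g"
proof (rule linked_if_gram_le[OF _ g0])
  define X where "X = (norm x)\<^sup>2"
  define G where "G = (norm g)\<^sup>2"
  have X: "X > 0" and G: "G > 0"
    using x g0 by (simp_all add: X_def G_def)
  show "x + t *\<^sub>R g \<noteq> 0"
    using add_scaleR_orthogonal_neq_0[OF g x] .
  have inner: "cmod (cinner g (x + t *\<^sub>R g)) = t * G"
    using g t by (simp add: cinner_add_right cinner_scaleR_right cinner_self G_def norm_mult norm_power)
  have "kappa\<^sup>2 * X \<le> t\<^sup>2 * G"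
    using power_mono[OF large, of 2] by (simp add: X_def G_def power_mult_distrib)
  then have "G * (kappa\<^sup>2 * X) \<le> G * (t\<^sup>2 * G)"
    using G by (intro mult_left_mono) auto
  then show "kappa\<^sup>2 * ((norm g)\<^sup>2 * (norm (x + t *\<^sub>R g))\<^sup>2 - (cmod (cinner g (x + t *\<^sub>R g)))\<^sup>2)
      \<le> (cmod (cinner g (x + t *\<^sub>R g)))\<^sup>2"
    unfolding inner norm_add_scaleR_orthogonal[OF g] X_def[symmetric] G_def[symmetric]
    by (simp add: power2_eq_square algebra_simps)
qed

lemma linked_orthogonal:
  assumes x: "x \<noteq> 0" and g0: "g \<noteq> 0" and g: "cinner g x = 0"
  shows "linked (unitary_orbit W) x g"
proof -
  define \<epsilon> where "\<epsilon> = norm x / ((\<bar>kappa\<bar> + 1) * norm g)"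
  have \<epsilon>: "\<epsilon> > 0" and step_size: "(\<bar>kappa\<bar> + 1) * \<epsilon> * norm g = norm x"
    using x g0 by (simp_all add: \<epsilon>_def)
  have small: "\<bar>kappa\<bar> * \<epsilon> * norm g \<le> norm x"
    unfolding step_size[symmetric] using \<epsilon> by (intro mult_right_mono) auto
  have path: "(coplanar (unitary_orbit W))\<^sup>*\<^sup>* x (x + (real j * \<epsilon>) *\<^sub>R g)" for j
  proof (induction j)
    case (Suc j)
    have "\<bar>kappa\<bar> * (real (Suc j) * \<epsilon> - real j * \<epsilon>) * norm g \<le> norm x"
      using small by (simp add: algebra_simps)
    then have "linked (unitary_orbit W) (x + (real j * \<epsilon>) *\<^sub>R g) (x + (real (Suc j) * \<epsilon>) *\<^sub>R g)"
      using \<epsilon> by (intro linked_line_step[OF x g]) auto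
    then show ?case
      using Suc.IH by (meson rtranclp_trans tranclp_into_rtranclp)
  qed simp
  define m where "m = nat \<lceil>\<bar>kappa\<bar> * (\<bar>kappa\<bar> + 1)\<rceil>"
  have "\<bar>kappa\<bar> * norm x = \<bar>kappa\<bar> * (\<bar>kappa\<bar> + 1) * \<epsilon> * norm g"
    by (simp add: step_size[symmetric] mult.assoc)
  also have "\<dots> \<le> real m * \<epsilon> * norm g"
    using \<epsilon> by (intro mult_right_mono) (auto simp: m_def)
  finally have "linked (unitary_orbit W) (x + (real m * \<epsilon>) *\<^sub>R g) g"
    using \<epsilon> by (intro linked_line_end[OF x g0 g]) auto
  then show ?thesis
    by (rule rtranclp_tranclp_tranclp[OF path])
qed

lemma linked_nonzero:
  assumes "x \<noteq> 0" "y \<noteq> 0"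
  shows "linked (unitary_orbit W) x y"
proof -
  obtain f where f: "f \<noteq> 0" "cinner f x = 0" "cinner f y = 0"
    using cinner_orthogonal_exists[OF card_ge_3] by blast
  have "linked (unitary_orbit W) x f" "linked (unitary_orbit W) y f"
    using linked_orthogonal assms f by blast+
  then show ?thesis
    by (blast intro: tranclp_trans linked_sym)
qed

end

lemma smult_mem_span_i: "c *s a \<in> span {a, \<i> *s a}"
proof -
  have "c *s a = Re c *\<^sub>R a + Im c *\<^sub>R (\<i> *s a)"
    by (simp add: scaleR_eq_of_real_smult vec_eq_iff complex_eq_iff)
  then show ?thesis
    by (metis insert_iff span_add span_base span_scale)
qed

lemma noncomplex_plane_basis:
  assumes "W \<in> real_grassmannian2" and "\<not> complex_line W"
  obtains a e lam where "a \<in> W" "lam *s a + e \<in> W" "a \<noteq> 0" "e \<noteq> 0" "cinner e a = 0"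
proof -
  have W: "subspace W" "dim W = 2"
    using assms(1) by (auto simp: real_grassmannian2_def)
  then obtain a where a: "a \<in> W" "a \<noteq> 0"
    using dim_eq_0[of W] by auto
  have "\<exists>b\<in>W. \<forall>c. b \<noteq> c *s a"
  proof (rule ccontr)
    assume "\<not> ?thesis"
    then have W_sub: "W \<subseteq> {c *s a | c. True}"
      by auto
    have "dim (span {a, \<i> *s a}) \<le> card {a, \<i> *s a}"
      by (rule dim_le_card) auto
    also have "\<dots> \<le> dim W"
      using W(2) by (simp add: card_insert_if)
    finally have "dim (span {a, \<i> *s a}) \<le> dim W" .
    moreover have "W \<subseteq> span {a, \<i> *s a}"
      using W_sub smult_mem_span_i by blast
    ultimately have "W = span {a, \<i> *s a}"
      using W(1) by (intro subspace_dim_equal) (auto simp: subspace_span)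
    then have "W = {c *s a | c. True}"
      using W_sub smult_mem_span_i by auto
    then show False
      using assms(2) a(2) by (auto simp: complex_line_def)
  qed
  then obtain b where b: "b \<in> W" "\<And>c. b \<noteq> c *s a"
    by blast
  obtain lam e where b_eq: "b = lam *s a + e" and "cinner e a = 0"
    using cinner_orthogonal_decomposition[OF a(2)] .
  moreover have "e \<noteq> 0"
    using b(2)[of lam] b_eq by auto
  ultimately show ?thesis
    using a b(1) by (intro that[of a lam e]) auto
qed

theorem proposition11p7:
  fixes W :: "(complex ^ 'n) set"
  assumes "CARD('n) \<ge> 3"
    and "W \<in> real_grassmannian2"
    and "\<not> complex_line W"
  shows "transitivity_property (unitary_orbit W)"
proof -
  obtain a e lam where "a \<in> W" "lam *s a + e \<in> W" "a \<noteq> 0" "e \<noteq> 0" "cinner e a = 0"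
    using noncomplex_plane_basis assms(2,3) by blast
  moreover have "subspace W"
    using assms(2) by (simp add: real_grassmannian2_def)
  ultimately interpret noncomplex_plane W a e lam
    using assms(1) by unfold_locales
  show ?thesis
    using zero_mem_unitary_orbit[OF subspace_W] linked_nonzero
    by (rule transitivity_property_if_linked)
qed

end
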